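(* Let $n_{\mathrm{in}}\in\mathbb{N}$, let $\Omega\subset\mathbb{R}^{n_{\mathrm{in}}}$ be compact and let $f:\Omega\to\mathbb{R}$ be continuous. For every $\epsilon>0$ there exists a discrete-time LIF-SNN $\Phi$ with direct encoding, membrane potential output, $L=2$ hidden layers and latency $T=1$ such that $\sup_{x\in\Omega}|R(\Phi)(x)-f(x)|\le\epsilon$. Moreover, if $f$ is $\Gamma$-Lipschitz with respect to $\|\cdot\|_\infty$ (i.e. $|f(x)-f(y)|\le\Gamma\|x-y\|_\infty$ for all $x,y\in\Omega$), then $\Phi$ can be chosen with hidden-layer widths $n_1=\Big(\max\Big\{\Big\lceil\frac{\operatorname{diam}_\infty(\Omega)}{\epsilon}\Gamma\Big\rceil,1\Big\}+1\Big)n_{\mathrm{in}}$ and $n_2=\max\Big\{\Big\lceil\frac{\operatorname{diam}_\infty(\Omega)}{\epsilon}\Gamma\Big\rceil^{n_{\mathrm{in}}},1\Big\}$, where $\operatorname{diam}_\infty(\Omega)=\sup_{x,y\in\Omega}\|x-y\|_\infty$.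
   Context: A discrete-time LIF-SNN $\Phi$ with $L$ hidden layers of widths $n_1,\dots,n_L$, input dimension $n_0=n_{\mathrm{in}}$, output dimension $n_{\mathrm{out}}$ and latency $T\in\mathbb{N}$ has parameters $W^\ell\in\mathbb{R}^{n_\ell\times n_{\ell-1}}$, $b^\ell\in\mathbb{R}^{n_\ell}$, $u^\ell(0)\in\mathbb{R}^{n_\ell}$, $\beta^\ell\in[0,1]$, $\vartheta^\ell>0$ ($\ell\in[L]$). With direct encoding, the initial spike activations are $s^0(t)=x$ for all $t\in[T]$, where $x\in\mathbb{R}^{n_{\mathrm{in}}}$ is the input. For $\ell\in[L]$, $t\in[T]$: $s^\ell(t)=H(\beta^\ell u^\ell(t-1)+W^\ell s^{\ell-1}(t)+b^\ell-\vartheta^\ell\mathbf{1})$ and $u^\ell(t)=\beta^\ell u^\ell(t-1)+W^\ell s^{\ell-1}(t)+b^\ell-\vartheta^\ell s^\ell(t)$, with $H$ the entrywise Heaviside function ($H(z)=1$ if $z\ge0$, else $0$). With membrane potential output, the realization is $R(\Phi)(x)=\sum_{t=1}^T a_t\,(V s^L(t)+c)\in\mathbb{R}^{n_{\mathrm{out}}}$ for decoder parameters $a\in\mathbb{R}^T$, $V\in\mathbb{R}^{n_{\mathrm{out}}\times n_L}$, $c\in\mathbb{R}^{n_{\mathrm{out}}}$. Here $n_{\mathrm{out}}=1$. *)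

theory Defs
  imports "HOL-Analysis.Analysis"
begin

text \<open>Discrete-time LIF spiking neural network with output dimension 1.
  Layer widths are given by snn_width (layer 0 = input dimension).
  Matrices are indexed as snn_W P l i j (layer l, row i, column j); only indices
  i < width l and j < width (l-1) are ever used.\<close>

record snn =
  snn_L :: nat
  snn_T :: nat
  snn_width :: "nat \<Rightarrow> nat"
  snn_W :: "nat \<Rightarrow> nat \<Rightarrow> nat \<Rightarrow> real"
  snn_b :: "nat \<Rightarrow> nat \<Rightarrow> real"
  snn_u0 :: "nat \<Rightarrow> nat \<Rightarrow> real"
  snn_beta :: "nat \<Rightarrow> real"
  snn_theta :: "nat \<Rightarrow> real"
  snn_a :: "nat \<Rightarrow> real"
  snn_V :: "nat \<Rightarrow> real"
  snn_c :: real

definition heaviside :: "real \<Rightarrow> real" where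
  "heaviside z = (if z \<ge> 0 then 1 else 0)"

text \<open>lif_state P x l t = (s^l(t), u^l(t)) with direct encoding s^0(t) = x.
  For t = 0 only the initial potential u^l(0) is meaningful.\<close>

fun lif_state :: "snn \<Rightarrow> (nat \<Rightarrow> real) \<Rightarrow> nat \<Rightarrow> nat \<Rightarrow> (nat \<Rightarrow> real) \<times> (nat \<Rightarrow> real)" where
  "lif_state P x 0 t = (x, (\<lambda>_. 0))"
| "lif_state P x (Suc k) 0 = ((\<lambda>_. 0), snn_u0 P (Suc k))"
| "lif_state P x (Suc k) (Suc t) =
     (let sp = fst (lif_state P x k (Suc t));
          up = snd (lif_state P x (Suc k) t);
          pre = (\<lambda>i. snn_beta P (Suc k) * up i
                     + (\<Sum>j<snn_width P k. snn_W P (Suc k) i j * sp j) + snn_b P (Suc k) i);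
          s = (\<lambda>i. heaviside (pre i - snn_theta P (Suc k)))
      in (s, (\<lambda>i. pre i - snn_theta P (Suc k) * s i)))"

definition snn_spikes :: "snn \<Rightarrow> (nat \<Rightarrow> real) \<Rightarrow> nat \<Rightarrow> nat \<Rightarrow> (nat \<Rightarrow> real)" where
  "snn_spikes P x l t = fst (lif_state P x l t)"

definition snn_realization :: "snn \<Rightarrow> (nat \<Rightarrow> real) \<Rightarrow> real" where
  "snn_realization P x =
     (\<Sum>t=1..snn_T P. snn_a P t *
        ((\<Sum>j<snn_width P (snn_L P). snn_V P j * snn_spikes P x (snn_L P) t j) + snn_c P))"

definition snn_wf :: "nat \<Rightarrow> snn \<Rightarrow> bool" where
  "snn_wf n P \<longleftrightarrow> snn_width P 0 = n \<and>
     (\<forall>l\<in>{1..snn_L P}. 0 \<le> snn_beta P l \<and> snn_beta P l \<le> 1 \<and> 0 < snn_theta P l)"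

definition coord_enum :: "nat \<Rightarrow> 'n::finite" where
  "coord_enum = (SOME e. bij_betw e {..<CARD('n)} (UNIV :: 'n set))"

definition vec_input :: "real^'n \<Rightarrow> nat \<Rightarrow> real" where
  "vec_input x j = x $ coord_enum j"

definition diam_inf :: "(real^'n) set \<Rightarrow> real" where
  "diam_inf \<Omega> = (SUP x\<in>\<Omega>. SUP y\<in>\<Omega>. infnorm (x - y))"

end

theory Submission
  imports Defs
begin

text \<open>With latency 1 and no leak, a LIF-SNN is a feed-forward network with two Heaviside layers.
  Cover the range of the data by a grid of \<open>N\<close> cells of width \<open>h\<close> per coordinate. The first
  layer compares every coordinate with the \<open>N - 1\<close> interior grid thresholds, so that coordinate
  \<open>k\<close> is encoded by the staircase \<open>r \<mapsto> [r \<le> c\<^sub>k]\<close>, where \<open>c\<^sub>k\<close> is the index of its cell.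
  The second layer has one neuron per multi-index \<open>a \<in> {0..<N}\<^sup>n\<close>; it takes differences of
  adjacent staircase neurons and fires exactly when \<open>a = c\<close>. Reading out, for every cell, the value
  of \<open>f\<close> at some sample point of the domain in that cell, the network maps \<open>x\<close> to \<open>f y\<close> for a
  \<open>y\<close> with \<open>\<parallel>x - y\<parallel>\<^sub>\<infinity> \<le> h\<close>. Uniform continuity, resp. the Lipschitz bound with
  \<open>h = diam\<^sub>\<infinity> \<Omega> / N\<close> and \<open>N = \<lceil>diam\<^sub>\<infinity> \<Omega> \<Gamma> / \<epsilon>\<rceil>\<close>, then bounds the error.\<close>

definition two_layer_snn ::
  "nat \<Rightarrow> nat \<Rightarrow> nat \<Rightarrow> (nat \<Rightarrow> nat \<Rightarrow> real) \<Rightarrow> (nat \<Rightarrow> real) \<Rightarrow>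
   (nat \<Rightarrow> nat \<Rightarrow> real) \<Rightarrow> (nat \<Rightarrow> real) \<Rightarrow> (nat \<Rightarrow> real) \<Rightarrow> real \<Rightarrow> snn" where
  "two_layer_snn n w1 w2 W1 b1 W2 b2 V c =
     \<lparr> snn_L = 2, snn_T = 1,
       snn_width = (\<lambda>l. if l = 0 then n else if l = 1 then w1 else w2),
       snn_W = (\<lambda>l. if l = 1 then W1 else W2), snn_b = (\<lambda>l. if l = 1 then b1 else b2),
       snn_u0 = (\<lambda>_ _. 0), snn_beta = (\<lambda>_. 0), snn_theta = (\<lambda>_. 1),
       snn_a = (\<lambda>_. 1), snn_V = V, snn_c = c \<rparr>"

lemma two_layer_snn_simps:
  "snn_wf n (two_layer_snn n w1 w2 W1 b1 W2 b2 V c)"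
  "snn_L (two_layer_snn n w1 w2 W1 b1 W2 b2 V c) = 2"
  "snn_T (two_layer_snn n w1 w2 W1 b1 W2 b2 V c) = 1"
  "snn_width (two_layer_snn n w1 w2 W1 b1 W2 b2 V c) 1 = w1"
  "snn_width (two_layer_snn n w1 w2 W1 b1 W2 b2 V c) 2 = w2"
  by (simp_all add: two_layer_snn_def snn_wf_def)

lemma snn_realization_two_layer_snn:
  "snn_realization (two_layer_snn n w1 w2 W1 b1 W2 b2 V c) x =
     (\<Sum>p<w2. V p * heaviside
        ((\<Sum>q<w1. W2 p q * heaviside ((\<Sum>j<n. W1 q j * x j) + b1 q - 1)) + b2 p - 1)) + c"
  by (simp add: snn_realization_def snn_spikes_def two_layer_snn_def numeral_2_eq_2 Let_def)

lemma snn_constant: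
  "\<exists>P. snn_wf n P \<and> snn_L P = 2 \<and> snn_T P = 1 \<and> snn_width P 1 = w1 \<and> snn_width P 2 = w2 \<and>
     (\<forall>x. snn_realization P x = c)"
proof -
  let ?P = "two_layer_snn n w1 w2 (\<lambda>_ _. 0) (\<lambda>_. 0) (\<lambda>_ _. 0) (\<lambda>_. 0) (\<lambda>_. 0) c"
  have "snn_realization ?P x = c" for x
    by (simp add: snn_realization_two_layer_snn)
  then show ?thesis
    using two_layer_snn_simps[of n w1 w2 "\<lambda>_ _. 0" "\<lambda>_. 0" "\<lambda>_ _. 0" "\<lambda>_. 0" "\<lambda>_. 0" c] by blast
qed

text \<open>The index of the cell \<open>[m + c h, m + (c + 1) h)\<close> containing \<open>v\<close> among \<open>N\<close> cells starting at \<open>m\<close>;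
  values below \<open>m\<close> fall into cell \<open>0\<close> and values beyond the grid into cell \<open>N - 1\<close>.\<close>

definition grid_cell :: "real \<Rightarrow> real \<Rightarrow> nat \<Rightarrow> real \<Rightarrow> nat" where
  "grid_cell m h N v = min (N - 1) (nat \<lfloor>(v - m) / h\<rfloor>)"

lemma grid_cell_less: "0 < N \<Longrightarrow> grid_cell m h N v < N"
  by (simp add: grid_cell_def)

lemma le_grid_cell_iff:
  assumes "0 < h" "0 < r" "r < N"
  shows "r \<le> grid_cell m h N v \<longleftrightarrow> m + real r * h \<le> v"
proof -
  have "r \<le> grid_cell m h N v \<longleftrightarrow> int r \<le> \<lfloor>(v - m) / h\<rfloor>"
    using assms(2,3) by (auto simp: grid_cell_def)
  also have "\<dots> \<longleftrightarrow> real r \<le> (v - m) / h"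
    by (simp add: le_floor_iff)
  also have "\<dots> \<longleftrightarrow> m + real r * h \<le> v"
    using assms(1) by (simp add: pos_le_divide_eq algebra_simps)
  finally show ?thesis .
qed

lemma grid_cell_bounds:
  assumes "0 < h" "0 < N" "m \<le> v" "v \<le> m + real N * h"
  shows "m + real (grid_cell m h N v) * h \<le> v \<and> v \<le> m + real (Suc (grid_cell m h N v)) * h"
proof
  let ?c = "grid_cell m h N v" and ?z = "\<lfloor>(v - m) / h\<rfloor>"
  have z: "0 \<le> ?z"
    using assms(1,3) by simp
  have "real ?c \<le> real (nat ?z)"
    by (simp add: grid_cell_def)
  also have "\<dots> \<le> (v - m) / h"
    using z by simp
  finally show "m + real ?c * h \<le> v"
    using assms(1) by (simp add: pos_le_divide_eq algebra_simps)
  show "v \<le> m + real (Suc ?c) * h"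
  proof (cases "?c = N - 1")
    case True
    then show ?thesis
      using assms(2,4) by simp
  next
    case False
    then have "?c = nat ?z"
      by (simp add: grid_cell_def min_def split: if_splits)
    then have "(v - m) / h < real (Suc ?c)"
      using z by linarith
    then show ?thesis
      using assms(1) by (simp add: divide_less_eq algebra_simps)
  qed
qed

lemma grid_cell_eq_imp_dist_le:
  assumes h: "0 < h" and N: "0 < N"
    and v: "m \<le> v \<and> v \<le> m + real N * h" and w: "m \<le> w \<and> w \<le> m + real N * h"
    and cell: "grid_cell m h N v = grid_cell m h N w"
  shows "\<bar>v - w\<bar> \<le> h"
proof -
  have "m + real (grid_cell m h N v) * h \<le> v \<and> v \<le> m + real (Suc (grid_cell m h N v)) * h"
    using grid_cell_bounds h N v by blast
  moreover have "m + real (grid_cell m h N w) * h \<le> w \<and> w \<le> m + real (Suc (grid_cell m h N w)) * h"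
    using grid_cell_bounds h N w by blast
  ultimately show ?thesis
    using cell by (simp add: abs_le_iff algebra_simps)
qed

lemma sum_step_difference:
  fixes c :: nat
  assumes "a < N"
  shows "(\<Sum>r<N + 1. (of_bool (r = a) - of_bool (r = Suc a)) * of_bool (r \<le> c)) = (of_bool (a = c) :: real)"
proof -
  have "(\<Sum>r<N + 1. (of_bool (r = a) - of_bool (r = Suc a)) * of_bool (r \<le> c))
      = (\<Sum>r<N + 1. if r = a then of_bool (a \<le> c) else 0)
        - (\<Sum>r<N + 1. if r = Suc a then of_bool (Suc a \<le> c) else (0::real))"
    by (simp add: left_diff_distrib sum_subtractf if_distrib cong: if_cong)
  also have "\<dots> = of_bool (a = c)"
    using assms by auto
  finally show ?thesis .
qed

lemma heaviside_count_minus_card: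
  assumes "finite K"
  shows "heaviside ((\<Sum>k\<in>K. of_bool (P k)) - real (card K)) = of_bool (\<forall>k\<in>K. P k)"
proof -
  have le: "card (K \<inter> {k. P k}) \<le> card K"
    using assms by (intro card_mono) auto
  have "card (K \<inter> {k. P k}) = card K \<longleftrightarrow> K \<inter> {k. P k} = K"
    using card_subset_eq[OF assms, of "K \<inter> {k. P k}"] by auto
  also have "\<dots> \<longleftrightarrow> (\<forall>k\<in>K. P k)"
    by blast
  finally have "card (K \<inter> {k. P k}) = card K \<longleftrightarrow> (\<forall>k\<in>K. P k)" .
  then show ?thesis
    using le assms by (auto simp: heaviside_def)
qed

lemma sum_lessThan_mult_div_mod:
  fixes M :: nat
  assumes "0 < M"
  shows "(\<Sum>q<n * M. F (q div M) (q mod M)) = (\<Sum>k<n. \<Sum>r<M. F k r)"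
proof -
  have "(\<Sum>q<n * M. F (q div M) (q mod M)) = (\<Sum>k<n. \<Sum>q\<in>{k * M..<k * M + M}. F (q div M) (q mod M))"
    by (rule sum.nat_group[symmetric])
  also have "\<dots> = (\<Sum>k<n. \<Sum>r<M. F k r)"
  proof (rule sum.cong[OF refl])
    fix k
    have "(\<Sum>q\<in>{k * M..<k * M + M}. F (q div M) (q mod M))
        = (\<Sum>r\<in>{0..<M}. F ((r + k * M) div M) ((r + k * M) mod M))"
      using sum.shift_bounds_nat_ivl[of "\<lambda>q. F (q div M) (q mod M)" 0 "k * M" M]
      by (simp add: add.commute)
    also have "\<dots> = (\<Sum>r<M. F k r)"
      using assms by (intro sum.cong) auto
    finally show "(\<Sum>q\<in>{k * M..<k * M + M}. F (q div M) (q mod M)) = (\<Sum>r<M. F k r)" .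
  qed
  finally show ?thesis .
qed

definition grid_cells :: "nat \<Rightarrow> (nat \<Rightarrow> real) \<Rightarrow> real \<Rightarrow> nat \<Rightarrow> (nat \<Rightarrow> real) \<Rightarrow> nat \<Rightarrow> nat" where
  "grid_cells n m h N v = restrict (\<lambda>k. grid_cell (m k) h N (v k)) {..<n}"

lemma grid_cells_in_PiE: "0 < N \<Longrightarrow> grid_cells n m h N v \<in> PiE {..<n} (\<lambda>_. {..<N})"
  by (simp add: grid_cells_def grid_cell_less)

text \<open>First-layer neuron \<open>q = (N + 1) k + r\<close> compares coordinate \<open>k\<close> with the threshold \<open>m k + r h\<close>
  (the firing threshold 1 is compensated in the bias); neuron \<open>r = 0\<close> always fires and neuron
  \<open>r = N\<close> never does.\<close>

definition threshold_weight :: "nat \<Rightarrow> nat \<Rightarrow> nat \<Rightarrow> real" where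
  "threshold_weight N q j = of_bool (0 < q mod (N + 1) \<and> q mod (N + 1) < N \<and> j = q div (N + 1))"

definition threshold_bias :: "(nat \<Rightarrow> real) \<Rightarrow> real \<Rightarrow> nat \<Rightarrow> nat \<Rightarrow> real" where
  "threshold_bias m h N q =
     (if q mod (N + 1) = 0 then 1
      else if q mod (N + 1) < N then 1 - (m (q div (N + 1)) + real (q mod (N + 1)) * h)
      else 0)"

lemma heaviside_threshold_layer:
  assumes N: "0 < N" and h: "0 < h" and q: "q < (N + 1) * n"
  shows "heaviside ((\<Sum>j<n. threshold_weight N q j * v j) + threshold_bias m h N q - 1)
       = of_bool (q mod (N + 1) \<le> grid_cells n m h N v (q div (N + 1)))"
proof -
  let ?k = "q div (N + 1)" and ?r = "q mod (N + 1)"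
  have k: "?k < n"
    using q by (simp add: less_mult_imp_div_less mult.commute)
  have "(\<Sum>j<n. threshold_weight N q j * v j) = (\<Sum>j<n. if j = ?k then of_bool (0 < ?r \<and> ?r < N) * v ?k else 0)"
    by (intro sum.cong) (auto simp: threshold_weight_def)
  also have "\<dots> = of_bool (0 < ?r \<and> ?r < N) * v ?k"
    using k by simp
  finally have sum: "(\<Sum>j<n. threshold_weight N q j * v j) = of_bool (0 < ?r \<and> ?r < N) * v ?k" .
  have "?r < N + 1"
    by simp
  then consider "?r = 0" | "0 < ?r" "?r < N" | "?r = N"
    by linarith
  then show ?thesis
  proof cases
    case 1
    then show ?thesis
      by (simp add: sum threshold_bias_def heaviside_def)
  next
    case 2
    then show ?thesis
      using le_grid_cell_iff[OF h 2, of "m ?k" "v ?k"] k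
      by (simp add: sum threshold_bias_def heaviside_def grid_cells_def)
  next
    case 3
    have "grid_cells n m h N v ?k < N"
      using grid_cell_less[OF N] k by (simp add: grid_cells_def)
    with 3 show ?thesis
      by (simp add: sum threshold_bias_def heaviside_def)
  qed
qed

definition cell_detector_weight :: "nat \<Rightarrow> (nat \<Rightarrow> nat) \<Rightarrow> nat \<Rightarrow> real" where
  "cell_detector_weight N a q =
     of_bool (q mod (N + 1) = a (q div (N + 1))) - of_bool (q mod (N + 1) = Suc (a (q div (N + 1))))"

lemma heaviside_cell_detector:
  assumes a: "a \<in> PiE {..<n} (\<lambda>_. {..<N})" and c: "c \<in> PiE {..<n} (\<lambda>_. {..<N})"
  shows "heaviside ((\<Sum>q<(N + 1) * n. cell_detector_weight N a q * of_bool (q mod (N + 1) \<le> c (q div (N + 1))))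
           + (1 - real n) - 1) = of_bool (a = c)"
proof -
  have "(\<Sum>q<(N + 1) * n. cell_detector_weight N a q * of_bool (q mod (N + 1) \<le> c (q div (N + 1))))
      = (\<Sum>k<n. \<Sum>r<N + 1. (of_bool (r = a k) - of_bool (r = Suc (a k))) * of_bool (r \<le> c k))"
    unfolding cell_detector_weight_def mult.commute[of "N + 1" n]
    by (rule sum_lessThan_mult_div_mod[where
          F = "\<lambda>k r. (of_bool (r = a k) - of_bool (r = Suc (a k))) * of_bool (r \<le> c k)"]) simp
  also have "\<dots> = (\<Sum>k<n. of_bool (a k = c k))"
    using a by (intro sum.cong refl sum_step_difference) auto
  finally have sum: "(\<Sum>q<(N + 1) * n. cell_detector_weight N a q * of_bool (q mod (N + 1) \<le> c (q div (N + 1))))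
      = (\<Sum>k<n. of_bool (a k = c k))" .
  have ext: "(\<forall>k\<in>{..<n}. a k = c k) \<longleftrightarrow> a = c"
    using a c by (auto intro: PiE_ext)
  have "heaviside ((\<Sum>q<(N + 1) * n. cell_detector_weight N a q * of_bool (q mod (N + 1) \<le> c (q div (N + 1))))
      + (1 - real n) - 1) = heaviside ((\<Sum>k\<in>{..<n}. of_bool (a k = c k)) - real (card {..<n}))"
    unfolding sum by simp
  also have "\<dots> = of_bool (\<forall>k\<in>{..<n}. a k = c k)"
    by (rule heaviside_count_minus_card) simp
  also have "\<dots> = of_bool (a = c)"
    using ext by simp
  finally show ?thesis .
qed

definition grid_snn ::
  "nat \<Rightarrow> (nat \<Rightarrow> real) \<Rightarrow> real \<Rightarrow> nat \<Rightarrow> (nat \<Rightarrow> nat \<Rightarrow> nat) \<Rightarrow> ((nat \<Rightarrow> nat) \<Rightarrow> real) \<Rightarrow> snn" where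
  "grid_snn n m h N g V =
     two_layer_snn n ((N + 1) * n) (N ^ n) (threshold_weight N) (threshold_bias m h N)
       (\<lambda>p. cell_detector_weight N (g p)) (\<lambda>_. 1 - real n) (\<lambda>p. V (g p)) 0"

lemma grid_snn_simps:
  "snn_wf n (grid_snn n m h N g V)"
  "snn_L (grid_snn n m h N g V) = 2"
  "snn_T (grid_snn n m h N g V) = 1"
  "snn_width (grid_snn n m h N g V) 1 = (N + 1) * n"
  "snn_width (grid_snn n m h N g V) 2 = N ^ n"
  unfolding grid_snn_def by (rule two_layer_snn_simps)+

lemma snn_realization_grid_snn:
  assumes N: "0 < N" and h: "0 < h" and g: "bij_betw g {..<N ^ n} (PiE {..<n} (\<lambda>_. {..<N}))"
  shows "snn_realization (grid_snn n m h N g V) v = V (grid_cells n m h N v)"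
proof -
  let ?D = "PiE {..<n} (\<lambda>_. {..<N})" and ?c = "grid_cells n m h N v"
  have c: "?c \<in> ?D"
    by (rule grid_cells_in_PiE[OF N])
  have first_layer: "(\<Sum>q<(N + 1) * n. cell_detector_weight N (g p) q *
        heaviside ((\<Sum>j<n. threshold_weight N q j * v j) + threshold_bias m h N q - 1))
      = (\<Sum>q<(N + 1) * n. cell_detector_weight N (g p) q * of_bool (q mod (N + 1) \<le> ?c (q div (N + 1))))" for p
    by (intro sum.cong refl) (simp only: heaviside_threshold_layer[OF N h] lessThan_iff)
  have "snn_realization (grid_snn n m h N g V) v = (\<Sum>p<N ^ n. V (g p) * heaviside
      ((\<Sum>q<(N + 1) * n. cell_detector_weight N (g p) q * of_bool (q mod (N + 1) \<le> ?c (q div (N + 1))))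
        + (1 - real n) - 1))"
    by (simp only: grid_snn_def snn_realization_two_layer_snn first_layer add_0_right)
  also have "\<dots> = (\<Sum>p<N ^ n. V (g p) * of_bool (g p = ?c))"
  proof (intro sum.cong refl)
    fix p
    assume "p \<in> {..<N ^ n}"
    then have "g p \<in> ?D"
      by (rule bij_betw_apply[OF g])
    then show "V (g p) * heaviside ((\<Sum>q<(N + 1) * n. cell_detector_weight N (g p) q *
          of_bool (q mod (N + 1) \<le> ?c (q div (N + 1)))) + (1 - real n) - 1) = V (g p) * of_bool (g p = ?c)"
      by (simp only: heaviside_cell_detector[OF _ c])
  qed
  also have "\<dots> = (\<Sum>a\<in>?D. V a * of_bool (a = ?c))"
    by (rule sum.reindex_bij_betw[OF g])
  also have "\<dots> = (\<Sum>a\<in>?D. if a = ?c then V a else 0)"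
    by (rule sum.cong) auto
  also have "\<dots> = V ?c"
    using c by (simp add: finite_PiE sum.delta)
  finally show ?thesis .
qed

lemma snn_grid_sampling:
  fixes emb :: "'a \<Rightarrow> nat \<Rightarrow> real" and f :: "'a \<Rightarrow> real" and m :: "nat \<Rightarrow> real"
  assumes N: "0 < N" and h: "0 < h"
    and range: "\<forall>x\<in>\<Omega>. \<forall>k<n. m k \<le> emb x k \<and> emb x k \<le> m k + real N * h"
  shows "\<exists>P. snn_wf n P \<and> snn_L P = 2 \<and> snn_T P = 1 \<and>
           snn_width P 1 = (N + 1) * n \<and> snn_width P 2 = N ^ n \<and>
           (\<forall>x\<in>\<Omega>. \<exists>y\<in>\<Omega>. (\<forall>k<n. \<bar>emb x k - emb y k\<bar> \<le> h) \<and> snn_realization P (emb x) = f y)"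
proof -
  let ?cell = "grid_cells n m h N"
  have "card (PiE {..<n} (\<lambda>_. {..<N})) = N ^ n"
    by (simp add: card_PiE)
  then obtain g where g: "bij_betw g {..<N ^ n} (PiE {..<n} (\<lambda>_. {..<N}))"
    using finite_same_card_bij[of "{..<N ^ n}" "PiE {..<n} (\<lambda>_. {..<N})"] by (auto simp: finite_PiE)
  \<comment> \<open>cells without a sample point get an arbitrary readout, but no input ever selects them\<close>
  define V where "V a = f (SOME y. y \<in> \<Omega> \<and> ?cell (emb y) = a)" for a
  define P where "P = grid_snn n m h N g V"
  have "\<exists>y\<in>\<Omega>. (\<forall>k<n. \<bar>emb x k - emb y k\<bar> \<le> h) \<and> snn_realization P (emb x) = f y"
    if x: "x \<in> \<Omega>" for x
  proof -
    define y where "y = (SOME y. y \<in> \<Omega> \<and> ?cell (emb y) = ?cell (emb x))"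
    have y: "y \<in> \<Omega>" "?cell (emb y) = ?cell (emb x)"
      using someI[of "\<lambda>y. y \<in> \<Omega> \<and> ?cell (emb y) = ?cell (emb x)" x] x unfolding y_def by auto
    have "\<bar>emb x k - emb y k\<bar> \<le> h" if k: "k < n" for k
    proof (rule grid_cell_eq_imp_dist_le[OF h N])
      show "m k \<le> emb x k \<and> emb x k \<le> m k + real N * h"
        using range x k by blast
      show "m k \<le> emb y k \<and> emb y k \<le> m k + real N * h"
        using range y(1) k by blast
      show "grid_cell (m k) h N (emb x k) = grid_cell (m k) h N (emb y k)"
        using fun_cong[OF y(2), of k] k by (simp add: grid_cells_def)
    qed
    moreover have "snn_realization P (emb x) = f y"
      unfolding P_def snn_realization_grid_snn[OF N h g] by (simp add: V_def y_def)
    ultimately show ?thesis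
      using y(1) by blast
  qed
  then show ?thesis
    using grid_snn_simps[of n m h N g V] unfolding P_def by blast
qed

lemma coord_enum_bij: "bij_betw (coord_enum :: nat \<Rightarrow> 'n::finite) {..<CARD('n)} UNIV"
proof -
  have "\<exists>e. bij_betw e {..<CARD('n)} (UNIV :: 'n set)"
    using ex_bij_betw_nat_finite[of "UNIV :: 'n set"] by (simp add: atLeast0LessThan)
  then show ?thesis
    unfolding coord_enum_def by (rule someI_ex)
qed

lemma vec_input_diff: "vec_input (x - y) k = vec_input x k - vec_input y k"
  by (simp add: vec_input_def)

lemma infnorm_le_iff_vec_input:
  "infnorm (x :: real^'n) \<le> e \<longleftrightarrow> (\<forall>k<CARD('n). \<bar>vec_input x k\<bar> \<le> e)"
proof
  assume "infnorm x \<le> e"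
  then show "\<forall>k<CARD('n). \<bar>vec_input x k\<bar> \<le> e"
    unfolding vec_input_def using component_le_infnorm_cart order_trans by blast
next
  assume all: "\<forall>k<CARD('n). \<bar>vec_input x k\<bar> \<le> e"
  have "\<bar>x $ i\<bar> \<le> e" for i
  proof -
    obtain k where "k < CARD('n)" "coord_enum k = i"
      using coord_enum_bij[where 'n='n] by (metis UNIV_I bij_betw_iff_bijections lessThan_iff)
    then show ?thesis
      using all by (auto simp: vec_input_def)
  qed
  then show "infnorm x \<le> e"
    unfolding infnorm_cart by (intro cSup_least) auto
qed

lemma snn_grid_sampling_vec:
  fixes \<Omega> :: "(real^'n) set" and f :: "real^'n \<Rightarrow> real"
  assumes "0 < N" "0 < h"
    and diam: "\<forall>x\<in>\<Omega>. \<forall>y\<in>\<Omega>. infnorm (x - y) \<le> real N * h"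
  shows "\<exists>P. snn_wf CARD('n) P \<and> snn_L P = 2 \<and> snn_T P = 1 \<and>
           snn_width P 1 = (N + 1) * CARD('n) \<and> snn_width P 2 = N ^ CARD('n) \<and>
           (\<forall>x\<in>\<Omega>. \<exists>y\<in>\<Omega>. infnorm (x - y) \<le> h \<and> snn_realization P (vec_input x) = f y)"
proof -
  define m where "m k = Inf ((\<lambda>y. vec_input y k) ` \<Omega>)" for k
  have coord: "\<bar>vec_input x k - vec_input y k\<bar> \<le> real N * h"
    if "x \<in> \<Omega>" "y \<in> \<Omega>" "k < CARD('n)" for x y k
    using diam that by (simp add: infnorm_le_iff_vec_input vec_input_diff)
  have "\<forall>x\<in>\<Omega>. \<forall>k<CARD('n). m k \<le> vec_input x k \<and> vec_input x k \<le> m k + real N * h"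
  proof (intro ballI allI impI conjI)
    fix x k
    assume x: "x \<in> \<Omega>" and k: "k < CARD('n)"
    have lower: "vec_input x k - real N * h \<le> vec_input y k" if "y \<in> \<Omega>" for y
      using coord[OF x that k] by (simp add: abs_le_iff)
    then have "bdd_below ((\<lambda>y. vec_input y k) ` \<Omega>)"
      by (intro bdd_belowI2)
    then show "m k \<le> vec_input x k"
      unfolding m_def using x by (intro cInf_lower) auto
    have "vec_input x k - real N * h \<le> m k"
      unfolding m_def using x lower by (intro cInf_greatest) auto
    then show "vec_input x k \<le> m k + real N * h"
      by simp
  qed
  from snn_grid_sampling[OF assms(1,2) this, of f]
  show ?thesis
    by (simp add: infnorm_le_iff_vec_input vec_input_diff)
qed

lemma snn_approximation_from_modulus:
  fixes \<Omega> :: "(real^'n) set" and f :: "real^'n \<Rightarrow> real"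
  assumes "0 < N" "0 < h"
    and diam: "\<forall>x\<in>\<Omega>. \<forall>y\<in>\<Omega>. infnorm (x - y) \<le> real N * h"
    and modulus: "\<forall>x\<in>\<Omega>. \<forall>y\<in>\<Omega>. infnorm (x - y) \<le> h \<longrightarrow> \<bar>f y - f x\<bar> \<le> \<epsilon>"
  shows "\<exists>P. snn_wf CARD('n) P \<and> snn_L P = 2 \<and> snn_T P = 1 \<and>
           snn_width P 1 = (N + 1) * CARD('n) \<and> snn_width P 2 = N ^ CARD('n) \<and>
           (\<forall>x\<in>\<Omega>. \<bar>snn_realization P (vec_input x) - f x\<bar> \<le> \<epsilon>)"
proof -
  obtain P where P: "snn_wf CARD('n) P \<and> snn_L P = 2 \<and> snn_T P = 1 \<and>
      snn_width P 1 = (N + 1) * CARD('n) \<and> snn_width P 2 = N ^ CARD('n) \<and>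
      (\<forall>x\<in>\<Omega>. \<exists>y\<in>\<Omega>. infnorm (x - y) \<le> h \<and> snn_realization P (vec_input x) = f y)"
    using snn_grid_sampling_vec[OF assms(1,2) diam, of f] by (rule exE)
  have "\<bar>snn_realization P (vec_input x) - f x\<bar> \<le> \<epsilon>" if x: "x \<in> \<Omega>" for x
  proof -
    obtain y where y: "y \<in> \<Omega>" "infnorm (x - y) \<le> h" "snn_realization P (vec_input x) = f y"
      using P x by blast
    show ?thesis
      using modulus x y by simp
  qed
  with P show ?thesis
    by (intro exI[of _ P]) simp
qed

lemma snn_approximates_continuous:
  fixes \<Omega> :: "(real^'n) set" and f :: "real^'n \<Rightarrow> real"
  assumes "compact \<Omega>" "continuous_on \<Omega> f" "0 < \<epsilon>"
  shows "\<exists>P. snn_wf CARD('n) P \<and> snn_L P = 2 \<and> snn_T P = 1 \<and>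
           (\<forall>x\<in>\<Omega>. \<bar>snn_realization P (vec_input x) - f x\<bar> \<le> \<epsilon>)"
proof -
  obtain \<delta> where "0 < \<delta>" and \<delta>: "\<And>x y. x \<in> \<Omega> \<Longrightarrow> y \<in> \<Omega> \<Longrightarrow> dist y x < \<delta> \<Longrightarrow> dist (f y) (f x) < \<epsilon>"
    using compact_uniformly_continuous[OF assms(2,1)] assms(3)
    unfolding uniformly_continuous_on_def by metis
  obtain B where B: "\<And>x. x \<in> \<Omega> \<Longrightarrow> norm x \<le> B"
    using compact_imp_bounded[OF assms(1)] by (auto simp: bounded_iff)
  define h where "h = \<delta> / (sqrt CARD('n) + 1)"
  define N where "N = nat \<lceil>2 * B / h\<rceil> + 1"
  have "0 < h"
    using \<open>0 < \<delta>\<close> by (simp add: h_def add_nonneg_pos)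
  have "sqrt CARD('n) * h < \<delta>"
    using \<open>0 < \<delta>\<close> by (simp add: h_def field_simps add_nonneg_pos)
  have "2 * B / h \<le> real N"
    unfolding N_def by linarith
  then have NB: "2 * B \<le> real N * h"
    using \<open>0 < h\<close> by (simp add: pos_divide_le_eq)
  have diam: "\<forall>x\<in>\<Omega>. \<forall>y\<in>\<Omega>. infnorm (x - y) \<le> real N * h"
  proof (intro ballI)
    fix x y
    assume "x \<in> \<Omega>" "y \<in> \<Omega>"
    have "infnorm (x - y) \<le> norm x + norm y"
      using infnorm_le_norm[of "x - y"] norm_triangle_ineq4[of x y] by linarith
    then show "infnorm (x - y) \<le> real N * h"
      using B[OF \<open>x \<in> \<Omega>\<close>] B[OF \<open>y \<in> \<Omega>\<close>] NB by linarith
  qed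
  have modulus: "\<forall>x\<in>\<Omega>. \<forall>y\<in>\<Omega>. infnorm (x - y) \<le> h \<longrightarrow> \<bar>f y - f x\<bar> \<le> \<epsilon>"
  proof (intro ballI impI)
    fix x y
    assume x: "x \<in> \<Omega>" and y: "y \<in> \<Omega>" and "infnorm (x - y) \<le> h"
    have "dist y x \<le> sqrt CARD('n) * infnorm (x - y)"
      using norm_le_infnorm[of "x - y"] by (simp add: dist_norm norm_minus_commute)
    also have "\<dots> \<le> sqrt CARD('n) * h"
      using \<open>infnorm (x - y) \<le> h\<close> by (intro mult_left_mono) auto
    finally have "dist (f y) (f x) < \<epsilon>"
      using \<delta>[OF x y] \<open>sqrt CARD('n) * h < \<delta>\<close> by linarith
    then show "\<bar>f y - f x\<bar> \<le> \<epsilon>"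
      by (simp add: dist_real_def)
  qed
  have "0 < N"
    by (simp add: N_def)
  from snn_approximation_from_modulus[OF this \<open>0 < h\<close> diam modulus]
  show ?thesis
    by blast
qed

lemma infnorm_le_diam_inf:
  fixes \<Omega> :: "(real^'n) set"
  assumes "bounded \<Omega>" "x \<in> \<Omega>" "y \<in> \<Omega>"
  shows "infnorm (x - y) \<le> diam_inf \<Omega>"
proof -
  obtain B where B: "\<And>z. z \<in> \<Omega> \<Longrightarrow> norm z \<le> B"
    using assms(1) by (auto simp: bounded_iff)
  have bound: "infnorm (a - b) \<le> 2 * B" if "a \<in> \<Omega>" "b \<in> \<Omega>" for a b
    using infnorm_le_norm[of "a - b"] norm_triangle_ineq4[of a b] B[OF that(1)] B[OF that(2)] by linarith
  have "infnorm (x - y) \<le> (SUP b\<in>\<Omega>. infnorm (x - b))"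
    using assms(2,3) bound by (intro cSUP_upper bdd_aboveI2) auto
  also have "\<dots> \<le> diam_inf \<Omega>"
    unfolding diam_inf_def using assms(2,3) bound
    by (intro cSUP_upper bdd_aboveI2 cSUP_least) auto
  finally show ?thesis .
qed

lemma snn_approximates_lipschitz:
  fixes \<Omega> :: "(real^'n) set" and f :: "real^'n \<Rightarrow> real"
  assumes "compact \<Omega>" "0 < \<epsilon>"
    and lip: "\<forall>x\<in>\<Omega>. \<forall>y\<in>\<Omega>. \<bar>f x - f y\<bar> \<le> \<Gamma> * infnorm (x - y)"
  shows "\<exists>P. snn_wf CARD('n) P \<and> snn_L P = 2 \<and> snn_T P = 1 \<and>
           snn_width P 1 = nat ((max \<lceil>diam_inf \<Omega> / \<epsilon> * \<Gamma>\<rceil> 1 + 1) * int CARD('n)) \<and>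
           snn_width P 2 = nat (max (\<lceil>diam_inf \<Omega> / \<epsilon> * \<Gamma>\<rceil> ^ CARD('n)) 1) \<and>
           (\<forall>x\<in>\<Omega>. \<bar>snn_realization P (vec_input x) - f x\<bar> \<le> \<epsilon>)"
proof (cases "\<forall>x\<in>\<Omega>. \<forall>y\<in>\<Omega>. f x = f y")
  \<comment> \<open>this case contains \<open>\<Omega> = {}\<close> and \<open>diam\<^sub>\<infinity> \<Omega> \<Gamma> \<le> 0\<close>,
    where the prescribed widths need not fit a grid network\<close>
  case True
  have "f x = f (SOME x. x \<in> \<Omega>)" if "x \<in> \<Omega>" for x
    using True that someI[of "\<lambda>x. x \<in> \<Omega>" x] by blast
  then show ?thesis
    using snn_constant[of "CARD('n)" _ _ "f (SOME x. x \<in> \<Omega>)"] assms(2) by fastforce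
next
  case False
  then obtain x0 y0 where x0: "x0 \<in> \<Omega>" and y0: "y0 \<in> \<Omega>" and "f x0 \<noteq> f y0"
    by blast
  define d where "d = diam_inf \<Omega>"
  have diam: "infnorm (x - y) \<le> d" if "x \<in> \<Omega>" "y \<in> \<Omega>" for x y
    using infnorm_le_diam_inf[OF compact_imp_bounded[OF assms(1)] that] by (simp add: d_def)
  have "0 < \<bar>f x0 - f y0\<bar>"
    using \<open>f x0 \<noteq> f y0\<close> by simp
  also have "\<dots> \<le> \<Gamma> * infnorm (x0 - y0)"
    using lip x0 y0 by blast
  finally have "0 < \<Gamma>" "0 < d"
    using diam[OF x0 y0] infnorm_pos_le[of "x0 - y0"] by (auto simp: zero_less_mult_iff)
  define N where "N = nat \<lceil>d / \<epsilon> * \<Gamma>\<rceil>"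
  have "0 < d / \<epsilon> * \<Gamma>"
    using \<open>0 < \<Gamma>\<close> \<open>0 < d\<close> assms(2) by simp
  then have C: "\<lceil>d / \<epsilon> * \<Gamma>\<rceil> = int N" and "0 < N"
    unfolding N_def by auto
  define h where "h = d / real N"
  have "0 < h" and Nh: "real N * h = d"
    using \<open>0 < d\<close> \<open>0 < N\<close> by (simp_all add: h_def)
  have "\<Gamma> * h \<le> \<epsilon>"
  proof -
    have "d / \<epsilon> * \<Gamma> \<le> real N"
      using C by (metis le_of_int_ceiling of_int_of_nat_eq)
    then show ?thesis
      using assms(2) \<open>0 < N\<close> by (simp add: h_def field_simps)
  qed
  have grid: "\<forall>x\<in>\<Omega>. \<forall>y\<in>\<Omega>. infnorm (x - y) \<le> real N * h"
    using diam Nh by simp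
  have modulus: "\<forall>x\<in>\<Omega>. \<forall>y\<in>\<Omega>. infnorm (x - y) \<le> h \<longrightarrow> \<bar>f y - f x\<bar> \<le> \<epsilon>"
  proof (intro ballI impI)
    fix x y
    assume "x \<in> \<Omega>" "y \<in> \<Omega>" "infnorm (x - y) \<le> h"
    have "\<bar>f y - f x\<bar> \<le> \<Gamma> * infnorm (x - y)"
      using lip \<open>x \<in> \<Omega>\<close> \<open>y \<in> \<Omega>\<close> by (metis infnorm_sub)
    also have "\<dots> \<le> \<Gamma> * h"
      using \<open>infnorm (x - y) \<le> h\<close> \<open>0 < \<Gamma>\<close> by simp
    finally show "\<bar>f y - f x\<bar> \<le> \<epsilon>"
      using \<open>\<Gamma> * h \<le> \<epsilon>\<close> by simp
  qed
  have "(max \<lceil>d / \<epsilon> * \<Gamma>\<rceil> 1 + 1) * int CARD('n) = int ((N + 1) * CARD('n))"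
    using \<open>0 < N\<close> unfolding C by (simp add: max_absorb1 algebra_simps)
  then have w1: "nat ((max \<lceil>d / \<epsilon> * \<Gamma>\<rceil> 1 + 1) * int CARD('n)) = (N + 1) * CARD('n)"
    by (simp only: nat_int)
  have "max (\<lceil>d / \<epsilon> * \<Gamma>\<rceil> ^ CARD('n)) 1 = int (N ^ CARD('n))"
    using \<open>0 < N\<close> unfolding C by (simp add: max_absorb1)
  then have w2: "nat (max (\<lceil>d / \<epsilon> * \<Gamma>\<rceil> ^ CARD('n)) 1) = N ^ CARD('n)"
    by (simp only: nat_int)
  from snn_approximation_from_modulus[OF \<open>0 < N\<close> \<open>0 < h\<close> grid modulus]
  show ?thesis
    unfolding d_def[symmetric] w1 w2 .
qed

theorem theorem3p2:
  fixes \<Omega> :: "(real^'n) set" and f :: "real^'n \<Rightarrow> real" and \<epsilon> :: real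
  assumes "compact \<Omega>" and "continuous_on \<Omega> f" and "\<epsilon> > 0"
  shows "(\<exists>P. snn_wf CARD('n) P \<and> snn_L P = 2 \<and> snn_T P = 1 \<and>
            (\<forall>x\<in>\<Omega>. \<bar>snn_realization P (vec_input x) - f x\<bar> \<le> \<epsilon>))
       \<and> (\<forall>\<Gamma>::real. (\<forall>x\<in>\<Omega>. \<forall>y\<in>\<Omega>. \<bar>f x - f y\<bar> \<le> \<Gamma> * infnorm (x - y)) \<longrightarrow>
            (\<exists>P. snn_wf CARD('n) P \<and> snn_L P = 2 \<and> snn_T P = 1 \<and>
               snn_width P 1 = nat ((max \<lceil>diam_inf \<Omega> / \<epsilon> * \<Gamma>\<rceil> 1 + 1) * int CARD('n)) \<and>
               snn_width P 2 = nat (max (\<lceil>diam_inf \<Omega> / \<epsilon> * \<Gamma>\<rceil> ^ CARD('n)) 1) \<and>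
               (\<forall>x\<in>\<Omega>. \<bar>snn_realization P (vec_input x) - f x\<bar> \<le> \<epsilon>)))"
  using snn_approximates_continuous[OF assms] snn_approximates_lipschitz[OF assms(1,3)] by blast

end
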